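(* Fix $\lambda>0$, $\epsilon>0$, $L_{\max}>0$, a decoding error probability $\delta\in(0,0.5)$ and a channel gain $|h_{ab}|^2>0$. Let $X$ be an exponential random variable with mean $1/\lambda$ and, for $P_a>0$, note that $$\mathbb{E}\left[\ln(XP_a+1)-\frac{XP_a}{XP_a+1}\right]=f(P_a):=-\left[1+\left(1+\frac{\lambda}{P_a}\right)e^{\lambda/P_a}\,\mathrm{Ei}\left(-\frac{\lambda}{P_a}\right)\right].$$ For $L_1>0$ and $P_a>0$ let $$R(L_1,P_a)=\log_2\left(1+P_a|h_{ab}|^2\right)-\sqrt{\frac{1}{L_1}\left(1-\frac{1}{(1+P_a|h_{ab}|^2)^2}\right)}\,\frac{Q^{-1}(\delta)}{\ln 2}.$$ Consider maximizing $L_1 R(L_1,P_a)(1-\delta)$ over $L_1$ and $P_a$ subject to $L_1 f(P_a)\le 2\epsilon^2$ and $L_1\le L_{\max}$. Then, for a given $P_a$, the optimal number of channel uses is $$L_1^*=\min\left(L_{\max},\frac{2\epsilon^2}{f(P_a)}\right),$$ and the optimal transmit power is a solution of maximizing $L_1^* R(L_1^*,P_a)(1-\delta)$ over $P_a>0$.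
   Context: $\mathrm{Ei}(x)=-\int_{-x}^{\infty}\frac{e^{-t}}{t}\,dt$ is the exponential integral. $Q^{-1}$ is the inverse of the Gaussian Q-function. This is the single-antenna-adversary case ($M=1$): $L_1\left(\ln(XP_a+1)-\frac{XP_a}{XP_a+1}\right)$ is the Kullback–Leibler divergence between $L_1$ i.i.d. observations $\mathcal{CN}(0,1)$ and $\mathcal{CN}(0,P_aX+1)$ given channel gain $X$; $L_1$ is treated as a continuous variable.
   Formalization: For a given $P_a$, $L_1^*$ is optimal, and then the unique optimum, only when the maximum over $L_1$ is attained, that is, when $L_1^* R(L_1^*,P_a)$ is nonnegative. Apart from conventions, each condition added here is assumed in the paper as well or is needed for the statement above to hold. *)

theory Defs
  imports "HOL-Probability.Probability"
begin

text \<open>Exponential integral, Ei(x) = - integral from -x to infinity of exp(-t)/t dt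
  (used only for negative arguments, where the integral converges).\<close>
definition Ei :: "real \<Rightarrow> real" where
  "Ei x = - (LINT t:{-x..}|lborel. exp (- t) / t)"

definition Qfun :: "real \<Rightarrow> real" where
  "Qfun x = (LINT t:{x..}|lborel. std_normal_density t)"

definition Qinv :: "real \<Rightarrow> real" where
  "Qinv d = (THE x. Qfun x = d)"

definition fKL :: "real \<Rightarrow> real \<Rightarrow> real" where
  "fKL lam Pa = - (1 + (1 + lam / Pa) * exp (lam / Pa) * Ei (- lam / Pa))"

text \<open>Rate R(L1,Pa); g = |h_ab|^2, d = delta.\<close>
definition Rate :: "real \<Rightarrow> real \<Rightarrow> real \<Rightarrow> real \<Rightarrow> real" where
  "Rate g d L1 Pa = log 2 (1 + Pa * g)
     - sqrt ((1 / L1) * (1 - 1 / (1 + Pa * g)\<^sup>2)) * Qinv d / ln 2"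

definition obj :: "real \<Rightarrow> real \<Rightarrow> real \<Rightarrow> real \<Rightarrow> real" where
  "obj g d L1 Pa = L1 * Rate g d L1 Pa * (1 - d)"

definition feasible :: "real \<Rightarrow> real \<Rightarrow> real \<Rightarrow> real \<Rightarrow> real \<Rightarrow> bool" where
  "feasible lam eps Lmax L1 Pa \<longleftrightarrow>
     L1 > 0 \<and> Pa > 0 \<and> L1 * fKL lam Pa \<le> 2 * eps\<^sup>2 \<and> L1 \<le> Lmax"

definition Lstar :: "real \<Rightarrow> real \<Rightarrow> real \<Rightarrow> real \<Rightarrow> real" where
  "Lstar lam eps Lmax Pa = min Lmax (2 * eps\<^sup>2 / fKL lam Pa)"

end

theory Submission
  imports Defs "HOL-Real_Asymp.Real_Asymp"
begin

(* For x > 0 the integrand l e^(-l x) (ln (1 + p x) - p x / (1 + p x)) splits as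
   G'(x) + (p + l) e^(-l x) / (1 + p x) with G(x) = e^(-l x) (1 - ln (1 + p x)). G falls from 1 to 0,
   and the substitution t = (l / p) (1 + p x) turns the second integral into (e^(l/p) / p) times
   -Ei(-l/p); this gives f(P_a), which is positive because the integrand is. Hence the feasible L form
   the interval (0, L*], on which the objective is c (A L - B sqrt L) with A, c > 0: a convex function
   of sqrt L vanishing at 0, so it lies strictly below its chord from 0 and any maximiser is the end
   point L*. A maximiser must be assumed to exist: if the objective is negative at L*, its supremum 0
   is not attained. *)

definition kl_gain :: "real \<Rightarrow> real" where
  "kl_gain y = ln (y + 1) - y / (y + 1)"

lemma kl_gain_pos: "0 < y \<Longrightarrow> 0 < kl_gain y"
  using ln_add1_gt[of y] by (simp add: kl_gain_def add.commute)

lemma kl_gain_nonneg: "0 \<le> y \<Longrightarrow> 0 \<le> kl_gain y"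
  using kl_gain_pos[of y] by (cases "y = 0") (auto simp: kl_gain_def)

lemma kl_gain_le: "0 \<le> y \<Longrightarrow> kl_gain y \<le> y"
proof -
  assume "0 \<le> y"
  then have "0 \<le> y / (y + 1)" "ln (y + 1) \<le> y"
    using ln_add_one_self_le_self[of y] by (simp_all add: add.commute)
  then show ?thesis by (simp add: kl_gain_def)
qed

lemma integrable_exponential_density_moment:
  fixes l :: real assumes "0 < l"
  shows "integrable lborel (\<lambda>x. exponential_density l x * x ^ i)"
proof (rule integrableI_nonneg)
  show "AE x in lborel. 0 \<le> exponential_density l x * x ^ i"
    using assms by (intro AE_I2) (simp add: exponential_density_def)
  show "(\<integral>\<^sup>+x. exponential_density l x * x ^ i \<partial>lborel) < \<infinity>"
    using nn_integral_erlang_ith_moment[OF assms, of 0 i] by simp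
qed measurable

lemma integral_pos_if_pos_on_Ioi:
  fixes f :: "real \<Rightarrow> real"
  assumes "integrable lborel f" "\<And>x. 0 \<le> f x" "\<And>x. a < x \<Longrightarrow> 0 < f x"
  shows "0 < integral\<^sup>L lborel f"
proof (rule ccontr)
  assume "\<not> 0 < integral\<^sup>L lborel f"
  then have "integral\<^sup>L lborel f = 0"
    using Bochner_Integration.integral_nonneg[of lborel f] assms(2) by fastforce
  then have "AE x in lborel. f x = 0"
    using integral_nonneg_eq_0_iff_AE[OF assms(1)] assms(2) by simp
  moreover have "AE x in lborel. f x = 0 \<longrightarrow> x \<le> a"
    using assms(3) by (intro AE_I2) (metis less_irrefl not_le)
  ultimately have "AE x in lborel. x \<le> a"
    by eventually_elim blast
  then have "emeasure lborel {a<..} = 0"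
    by (subst AE_iff_measurable[symmetric, of "{a<..}"]) auto
  moreover have "emeasure lborel {a<..a + 1} \<le> emeasure lborel {a<..}"
    by (intro emeasure_mono) auto
  ultimately show False by simp
qed

lemma exponential_integral_eq_laplace:
  fixes l p :: real assumes "0 < l" "0 < p"
  shows "(LINT t:{l/p..}|lborel. exp (- t) / t)
    = exp (- (l / p)) * p * (LINT x:{0<..}|lborel. exp (- l * x) / (1 + p * x))"
proof -
  let ?K = "\<lambda>x. indicator {0<..} x * (exp (- l * x) / (1 + p * x))"
  have "(LINT t:{l/p..}|lborel. exp (- t) / t)
      = l * (\<integral>x. indicator {l/p..} (l/p + l * x) * (exp (- (l/p + l * x)) / (l/p + l * x)) \<partial>lborel)"
    using lborel_integral_real_affine[of l "\<lambda>t. indicator {l/p..} t * (exp (- t) / t)" "l/p"] assms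
    by (simp add: set_lebesgue_integral_def)
  also have "(\<integral>x. indicator {l/p..} (l/p + l * x) * (exp (- (l/p + l * x)) / (l/p + l * x)) \<partial>lborel)
      = (\<integral>x. exp (- (l / p)) * p / l * ?K x \<partial>lborel)"
  proof (rule integral_cong_AE)
    show "AE x in lborel. indicator {l/p..} (l/p + l * x) * (exp (- (l/p + l * x)) / (l/p + l * x))
        = exp (- (l / p)) * p / l * ?K x"
      using AE_lborel_singleton[of 0]
    proof eventually_elim
      case (elim x)
      have "0 \<le> x \<longleftrightarrow> l/p \<le> l/p + l * x" using assms by (simp add: zero_le_mult_iff)
      moreover have "0 < x \<Longrightarrow> exp (- (l/p + l * x)) / (l/p + l * x)
          = exp (- (l / p)) * p / l * (exp (- l * x) / (1 + p * x))"
      proof -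
        have "exp (- (l/p + l * x)) = exp (- (l / p)) * exp (- l * x)"
          by (simp add: mult_exp_exp)
        moreover have "l/p + l * x = l * (1 + p * x) / p" using assms by (simp add: field_simps)
        moreover assume "0 < x"
        ultimately show ?thesis using assms by (simp add: field_simps)
      qed
      ultimately show ?case using elim by (auto simp: indicator_def)
    qed
  qed measurable
  also have "\<dots> = exp (- (l / p)) * p / l * (\<integral>x. ?K x \<partial>lborel)"
    by (rule integral_mult_right_zero)
  finally show ?thesis using assms by (simp add: set_lebesgue_integral_def)
qed

lemma set_integral_Ioi_kl_derivative:
  fixes l p :: real assumes lp: "0 < l" "0 < p"
  defines "D \<equiv> \<lambda>x. - l * exp (- l * x) * (1 - ln (1 + p * x)) - exp (- l * x) * (p / (1 + p * x))"
  assumes D_int: "set_integrable lborel {0<..} D"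
  shows "(LINT x:{0<..}|lborel. D x) = -1"
proof -
  let ?G = "\<lambda>x. exp (- l * x) * (1 - ln (1 + p * x))"
  have Ioi: "einterval 0 \<infinity> = {0<..}"
    by (auto simp: einterval_def zero_ereal_def)
  have "(LBINT x=0..\<infinity>. D x) = 0 - 1"
  proof (rule interval_integral_FTC_integrable)
    fix x :: real assume "0 < ereal x"
    then have "0 < 1 + p * x" using lp by (simp add: zero_ereal_def add_pos_nonneg)
    then show "(?G has_vector_derivative D x) (at x)" "isCont D x"
      unfolding D_def has_real_derivative_iff_has_vector_derivative[symmetric]
      by (auto intro!: derivative_eq_intros continuous_intros simp: field_simps)
  next
    show "set_integrable lborel (einterval 0 \<infinity>) D" using D_int by (simp add: Ioi)
    show "((?G \<circ> real_of_ereal) \<longlongrightarrow> 1) (at_right 0)"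
      unfolding zero_ereal_def ereal_tendsto_simps1 using lp by real_asymp
    show "((?G \<circ> real_of_ereal) \<longlongrightarrow> 0) (at_left \<infinity>)"
      unfolding ereal_tendsto_simps1 using lp by real_asymp
  qed simp
  then show ?thesis by (simp add: interval_lebesgue_integral_def Ioi)
qed

lemma integrable_exponential_density_kl_gain:
  fixes l p :: real assumes lp: "0 < l" "0 < p"
  shows "integrable lborel (\<lambda>x. exponential_density l x * kl_gain (x * p))"
proof (rule Bochner_Integration.integrable_bound)
  show "integrable lborel (\<lambda>x. p * (exponential_density l x * x ^ 1))"
    using integrable_exponential_density_moment[OF lp(1), of 1] by simp
  show "AE x in lborel. norm (exponential_density l x * kl_gain (x * p))
      \<le> norm (p * (exponential_density l x * x ^ 1))"
    using lp kl_gain_nonneg kl_gain_le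
    by (intro AE_I2) (auto simp: exponential_density_def mult_left_mono mult.commute)
qed (simp add: kl_gain_def)

lemma set_integrable_exp_div_linear:
  fixes l p :: real assumes lp: "0 < l" "0 \<le> p"
  shows "set_integrable lborel {0<..} (\<lambda>x. exp (- l * x) / (1 + p * x))"
  unfolding set_integrable_def
proof (rule Bochner_Integration.integrable_bound)
  show "integrable lborel (\<lambda>x. exponential_density l x / l)"
    using integrable_exponential_density_moment[OF lp(1), of 0] by simp
  show "AE x in lborel. norm (indicator {0<..} x *\<^sub>R (exp (- l * x) / (1 + p * x)))
      \<le> norm (exponential_density l x / l)"
  proof (intro AE_I2)
    fix x :: real
    have "0 < x \<Longrightarrow> exp (- l * x) / (1 + p * x) \<le> exp (- l * x)"
      using lp by (simp add: add_pos_nonneg mult_imp_div_pos_le)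
    then show "norm (indicator {0<..} x *\<^sub>R (exp (- l * x) / (1 + p * x)))
        \<le> norm (exponential_density l x / l)"
      using lp by (auto simp: exponential_density_def indicator_def mult.commute)
  qed
qed simp

lemma integral_exponential_density_kl_gain:
  fixes l p :: real assumes lp: "0 < l" "0 < p"
  shows "(\<integral>x. exponential_density l x * kl_gain (x * p) \<partial>lborel) = fKL l p"
proof -
  define F where "F x = exponential_density l x * kl_gain (x * p)" for x
  define D where "D x = - l * exp (- l * x) * (1 - ln (1 + p * x)) - exp (- l * x) * (p / (1 + p * x))" for x
  define K where "K x = exp (- l * x) / (1 + p * x)" for x
  have F_eq: "F x = indicator {0<..} x * D x + (p + l) * (indicator {0<..} x * K x)" for x
  proof (cases "0 < x")
    case True
    define u where "u = 1 + p * x"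
    define e where "e = exp (- l * x)"
    have "0 < u" using True lp by (simp add: u_def add_pos_nonneg)
    have "F x = l * e * (ln u - (u - 1) / u)"
      using True by (simp add: F_def kl_gain_def exponential_density_def e_def u_def algebra_simps)
    also have "\<dots> = - l * e * (1 - ln u) - e * (p / u) + (p + l) * (e / u)"
      using \<open>0 < u\<close> by (simp add: field_simps)
    finally show ?thesis using True by (simp add: D_def K_def e_def u_def)
  qed (auto simp: F_def kl_gain_def exponential_density_def)
  have K_int: "set_integrable lborel {0<..} K"
    using set_integrable_exp_div_linear[of l p] lp by (simp add: K_def[abs_def])
  have "integrable lborel (\<lambda>x. F x - (p + l) * (indicator {0<..} x * K x))"
    using integrable_exponential_density_kl_gain[OF lp] K_int
    unfolding set_integrable_def F_def by simp
  then have D_int: "set_integrable lborel {0<..} D"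
    unfolding set_integrable_def by (simp add: F_eq)
  have "integral\<^sup>L lborel F = (LINT x:{0<..}|lborel. D x) + (p + l) * (LINT x:{0<..}|lborel. K x)"
    using D_int K_int unfolding F_eq set_integrable_def set_lebesgue_integral_def by simp
  also have "\<dots> = fKL l p"
    using set_integral_Ioi_kl_derivative[OF lp D_int[unfolded D_def]]
      exponential_integral_eq_laplace[OF lp] lp
    by (simp add: D_def K_def fKL_def Ei_def exp_minus field_simps)
  finally show ?thesis unfolding F_def .
qed

lemma fKL_pos:
  fixes l p :: real assumes lp: "0 < l" "0 < p"
  shows "0 < fKL l p"
proof -
  have "0 < (\<integral>x. exponential_density l x * kl_gain (x * p) \<partial>lborel)"
  proof (rule integral_pos_if_pos_on_Ioi[where a = 0])
    show "integrable lborel (\<lambda>x. exponential_density l x * kl_gain (x * p))"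
      using integrable_exponential_density_kl_gain[OF lp] .
    show "0 \<le> exponential_density l x * kl_gain (x * p)" for x
      using lp kl_gain_nonneg[of "x * p"] by (simp add: exponential_density_def)
    show "0 < exponential_density l x * kl_gain (x * p)" if "0 < x" for x
      using lp that kl_gain_pos[of "x * p"] by (simp add: exponential_density_def)
  qed
  then show ?thesis using integral_exponential_density_kl_gain[OF lp] by simp
qed

lemma expectation_kl_gain_exponential:
  fixes l p :: real
  assumes "0 < l" "0 < p" and "distributed M lborel X (exponential_density l)"
  shows "(\<integral>\<omega>. kl_gain (X \<omega> * p) \<partial>M) = fKL l p"
  using distributed_integral[OF assms(3), of "\<lambda>x. kl_gain (x * p)"]
    integral_exponential_density_kl_gain[OF assms(1,2)] exponential_density_nonneg[OF assms(1)]
  by (simp add: kl_gain_def)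

lemma is_arg_max_cong:
  assumes "\<And>y. P y \<longleftrightarrow> Q y" and "\<And>y. Q y \<Longrightarrow> f y = f' y"
  shows "is_arg_max f P x \<longleftrightarrow> is_arg_max f' Q x"
  using assms unfolding is_arg_max_def by auto

lemma is_arg_max_slice:
  assumes "is_arg_max (\<lambda>(x, y). f x y) (\<lambda>(x, y). P x y) (x0, y0)"
  shows "is_arg_max (\<lambda>x. f x y0) (\<lambda>x. P x y0) x0"
  using assms unfolding is_arg_max_def by auto

lemma is_arg_max_profile:
  fixes f :: "'a \<Rightarrow> 'b \<Rightarrow> 'c::linorder"
  assumes "is_arg_max (\<lambda>(x, y). f x y) (\<lambda>(x, y). P x y) (h y0, y0)"
    and "Q y0" and "\<And>y. Q y \<Longrightarrow> P (h y) y"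
  shows "is_arg_max (\<lambda>y. f (h y) y) Q y0"
  using assms unfolding is_arg_max_linorder by fastforce

lemma is_arg_max_right_endpoint:
  fixes f :: "real \<Rightarrow> real"
  assumes lim: "(f \<longlongrightarrow> 0) (at_right 0)"
    and below: "\<And>x. 0 < x \<Longrightarrow> x < S \<Longrightarrow> f x < max 0 (f S)"
    and max: "is_arg_max f (\<lambda>x. 0 < x \<and> x \<le> S) x1"
  shows "x1 = S"
proof (rule ccontr)
  assume "x1 \<noteq> S"
  have x1: "0 < x1" "x1 \<le> S" and le_max: "\<And>y. 0 < y \<Longrightarrow> y \<le> S \<Longrightarrow> f y \<le> f x1"
    using max unfolding is_arg_max_linorder by auto
  have "eventually (\<lambda>y. f y \<le> f x1) (at_right 0)"
    unfolding eventually_at_right_field using x1 le_max by (intro exI[of _ S]) auto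
  then have "0 \<le> f x1"
    using lim by (intro tendsto_upperbound) auto
  moreover have "f x1 < max 0 (f S)"
    using below x1 \<open>x1 \<noteq> S\<close> by simp
  ultimately show False
    using le_max[of S] x1 by simp
qed

lemma sqrt_objective_arg_max:
  fixes A B c S L1 :: real
  assumes A: "0 < A" and c: "0 < c"
    and max: "is_arg_max (\<lambda>L. c * (A * L - B * sqrt L)) (\<lambda>L. 0 < L \<and> L \<le> S) L1"
  shows "L1 = S"
proof (rule is_arg_max_right_endpoint[OF _ _ max])
  let ?h = "\<lambda>L. c * (A * L - B * sqrt L)"
  have "isCont ?h 0" by (intro continuous_intros)
  then show "(?h \<longlongrightarrow> 0) (at_right 0)"
    by (simp add: isCont_def filterlim_at_split)
  fix x assume x: "0 < x" "x < S"
  have "sqrt x * sqrt x < sqrt x * sqrt S"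
    using x by (intro mult_strict_left_mono) auto
  then have "c * (A * (sqrt x * sqrt x)) < c * (A * (sqrt x * sqrt S))"
    using A c by simp
  moreover have "sqrt (x / S) * ?h S = (sqrt x / sqrt S) * (c * (A * (sqrt S)\<^sup>2 - B * sqrt S))"
    using x by (simp add: real_sqrt_divide)
  moreover have "\<dots> = c * (A * (sqrt x * sqrt S) - B * sqrt x)"
    using x by (simp add: field_simps power2_eq_square)
  ultimately have "?h x < sqrt (x / S) * ?h S"
    using x by (simp add: algebra_simps)
  also have "\<dots> \<le> max 0 (?h S)"
    using x by (cases "0 \<le> ?h S") (auto intro: mult_left_le_one_le mult_nonneg_nonpos)
  finally show "?h x < max 0 (?h S)" .
qed

lemma obj_eq_sqrt:
  fixes g d L Pa :: real assumes "0 < L"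
  shows "obj g d L Pa = (1 - d) * (log 2 (1 + Pa * g) * L
     - (sqrt (1 - 1 / (1 + Pa * g)\<^sup>2) * Qinv d / ln 2) * sqrt L)"
proof -
  define c where "c = 1 - 1 / (1 + Pa * g)\<^sup>2"
  have "obj g d L Pa = (1 - d) * (log 2 (1 + Pa * g) * L - (L * sqrt (1 / L * c)) * Qinv d / ln 2)"
    unfolding obj_def Rate_def c_def[symmetric] by (simp add: algebra_simps)
  also have "L * sqrt (1 / L * c) = sqrt c * sqrt L"
    using assms by (simp add: real_sqrt_mult real_sqrt_divide field_simps)
  finally show ?thesis
    unfolding c_def by (simp add: algebra_simps)
qed

lemma feasible_iff_le_Lstar:
  assumes "0 < lam" "0 < Pa"
  shows "feasible lam eps Lmax L Pa \<longleftrightarrow> 0 < L \<and> L \<le> Lstar lam eps Lmax Pa"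
  using fKL_pos[OF assms] assms unfolding feasible_def Lstar_def
  by (auto simp: pos_le_divide_eq mult.commute)

lemma feasible_Lstar:
  assumes "0 < lam" "0 < eps" "0 < Lmax" "0 < Pa"
  shows "feasible lam eps Lmax (Lstar lam eps Lmax Pa) Pa"
  using fKL_pos[OF assms(1,4)] assms
  by (simp add: feasible_iff_le_Lstar Lstar_def)

lemma arg_max_obj_eq_Lstar:
  assumes "0 < lam" "d < 1" "0 < g" "0 < Pa"
    and max: "is_arg_max (\<lambda>L. obj g d L Pa) (\<lambda>L. feasible lam eps Lmax L Pa) L1"
  shows "L1 = Lstar lam eps Lmax Pa"
proof (rule sqrt_objective_arg_max)
  have "1 < 1 + Pa * g"
    using assms(3,4) by simp
  then show "0 < log 2 (1 + Pa * g)"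
    by simp
  show "0 < 1 - d"
    using assms(2) by simp
  show "is_arg_max (\<lambda>L. (1 - d) * (log 2 (1 + Pa * g) * L
      - (sqrt (1 - 1 / (1 + Pa * g)\<^sup>2) * Qinv d / ln 2) * sqrt L))
      (\<lambda>L. 0 < L \<and> L \<le> Lstar lam eps Lmax Pa) L1"
    using max by (subst is_arg_max_cong[symmetric])
      (auto simp: feasible_iff_le_Lstar[OF assms(1,4)] obj_eq_sqrt)
qed

theorem corollary1:
  fixes lam eps Lmax d g :: real
    and M :: "'a measure" and X :: "'a \<Rightarrow> real"
  assumes "lam > 0" and "eps > 0" and "Lmax > 0"
    and "0 < d" and "d < 0.5" and "g > 0"
    and "prob_space M" and "distributed M lborel X (exponential_density lam)"
  shows
    "(\<forall>Pa>0. integral\<^sup>L M (\<lambda>\<omega>. ln (X \<omega> * Pa + 1) - X \<omega> * Pa / (X \<omega> * Pa + 1))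
                = fKL lam Pa)
   \<and> (\<forall>Pa>0. (\<exists>L1. is_arg_max (\<lambda>L. obj g d L Pa) (\<lambda>L. feasible lam eps Lmax L Pa) L1)
          \<longrightarrow> is_arg_max (\<lambda>L. obj g d L Pa) (\<lambda>L. feasible lam eps Lmax L Pa)
                (Lstar lam eps Lmax Pa)
            \<and> (\<forall>L1. is_arg_max (\<lambda>L. obj g d L Pa) (\<lambda>L. feasible lam eps Lmax L Pa) L1
                    \<longrightarrow> L1 = Lstar lam eps Lmax Pa))
   \<and> (\<forall>L1 Pa. is_arg_max (\<lambda>(L, P). obj g d L P) (\<lambda>(L, P). feasible lam eps Lmax L P) (L1, Pa)
          \<longrightarrow> L1 = Lstar lam eps Lmax Pa
            \<and> is_arg_max (\<lambda>P. obj g d (Lstar lam eps Lmax P) P) (\<lambda>P. P > 0) Pa)"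
proof (intro conjI allI impI)
  have slice_max: "L1 = Lstar lam eps Lmax Pa"
    if "0 < Pa" "is_arg_max (\<lambda>L. obj g d L Pa) (\<lambda>L. feasible lam eps Lmax L Pa) L1" for L1 Pa
    using arg_max_obj_eq_Lstar[OF assms(1) _ assms(6) that] assms(5) by simp
  show "integral\<^sup>L M (\<lambda>\<omega>. ln (X \<omega> * Pa + 1) - X \<omega> * Pa / (X \<omega> * Pa + 1)) = fKL lam Pa"
    if "0 < Pa" for Pa
    using expectation_kl_gain_exponential[OF assms(1) that assms(8)] by (simp add: kl_gain_def)
  show "is_arg_max (\<lambda>L. obj g d L Pa) (\<lambda>L. feasible lam eps Lmax L Pa) (Lstar lam eps Lmax Pa)"
    if "0 < Pa" "\<exists>L1. is_arg_max (\<lambda>L. obj g d L Pa) (\<lambda>L. feasible lam eps Lmax L Pa) L1" for Pa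
    using that slice_max by metis
  show "L1 = Lstar lam eps Lmax Pa"
    if "0 < Pa" "is_arg_max (\<lambda>L. obj g d L Pa) (\<lambda>L. feasible lam eps Lmax L Pa) L1" for L1 Pa
    using slice_max that by blast
  fix L1 Pa
  assume max: "is_arg_max (\<lambda>(L, P). obj g d L P) (\<lambda>(L, P). feasible lam eps Lmax L P) (L1, Pa)"
  then have "0 < Pa"
    by (simp add: is_arg_max_def feasible_def)
  with max show L1: "L1 = Lstar lam eps Lmax Pa"
    using slice_max is_arg_max_slice by fast
  show "is_arg_max (\<lambda>P. obj g d (Lstar lam eps Lmax P) P) (\<lambda>P. P > 0) Pa"
    using max \<open>0 < Pa\<close> feasible_Lstar[OF assms(1-3)]
    unfolding L1 by (rule is_arg_max_profile)
qed

end
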